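(* Let $K$ be a skew field, $V$ a left (topological) $K$-vector space with basis $v^0,v^1,\ldots$, $V'$ the dual right $K$-vector space with basis $p_0,p_1,\ldots$, with pairing $(\cdot,\cdot)$; let $\mathbf f\in V$, $\mathbf g\in V'$, $y_i^k=(v^k,p_i)$, $f_i=(\mathbf f,p_i)$, $g^k=(v^k,\mathbf g)$, and assume $D=(y_i^k)$ generic. Then: (a) $(\Delta_R^m f)_{i_0\ldots i_m}^{k_0\ldots k_m}$ is symmetric with respect to $i_0,\ldots,i_m$ (invariant under any permutation of these indices) and with respect to $k_0,\ldots,k_{m-1}$. (b) $(\Delta_L^m g)_{i_0\ldots i_m}^{k_0\ldots k_m}$ is symmetric with respect to $k_0,\ldots,k_m$ and with respect to $i_0,\ldots,i_{m-1}$.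
   Context: The pairing $(\cdot,\cdot):V\times V'\to K$ is biadditive with $(\lambda v,p\mu)=\lambda(v,p)\mu$. $D$ is the infinite matrix with entry $y_i^k$ in row $k$, column $i$. Difference derivatives: for pairwise distinct $i_0,\ldots,i_m$ and pairwise distinct $k_0,\ldots,k_m$ (extended to permutations $i_0,i_1,\ldots$ and $k_0,k_1,\ldots$ of $\{0,1,\ldots\}$), for generic $D$ there are unique upper triangular $A=(a_m^j)$ and lower triangular $C=(c_l^m)$ such that $q_m=\sum_{j=0}^m p_{i_j}a_m^j$, $w^m=\sum_{l=0}^m c_l^m v^{k_l}$ satisfy $(w^m,q_{m'})=0$ for $m\ne m'$ and $(w^m,p_{i_m})=(v^{k_m},q_m)=1$ (equivalently, $q_m$ is the unique right combination of $p_{i_0},\ldots,p_{i_m}$ with $(v^{k_l},q_m)=\delta_{lm}$ for $l\le m$, and $w^m$ the unique left combination of $v^{k_0},\ldots,v^{k_m}$ with $(w^m,p_{i_j})=\delta_{jm}$ for $j\le m$). Define $(\Delta_R^m f)_{i_0\ldots i_m}^{k_0\ldots k_m}=\sum_j f_{i_j}a_m^j=(\mathbf f,q_m)$ and $(\Delta_L^m g)_{i_0\ldots i_m}^{k_0\ldots k_m}=\sum_l c_l^m g^{k_l}=(w^m,\mathbf g)$. Genericity means all finite square submatrices of $D$ that need to be inverted are invertible. *)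

theory Defs
  imports "Jordan_Normal_Form.Matrix"
begin

text \<open>Coordinates: y k i = y_i^k = (v^k, p_i); f i = f_i = (f, p_i); g k = g^k = (v^k, g).
  Index tuples i_0..i_m and k_0..k_m are lists of length m+1.\<close>

definition subD :: "(nat \<Rightarrow> nat \<Rightarrow> 'a) \<Rightarrow> nat list \<Rightarrow> nat list \<Rightarrow> 'a mat" where
  "subD y ks is = mat (length ks) (length is) (\<lambda>(l, j). y (ks ! l) (is ! j))"

definition generic :: "(nat \<Rightarrow> nat \<Rightarrow> 'a::division_ring) \<Rightarrow> bool" where
  "generic y \<longleftrightarrow> (\<forall>ks is. length ks = length is \<longrightarrow> distinct ks \<longrightarrow> distinct is \<longrightarrow>
      invertible_mat (subD y ks is))"

text \<open>Coefficients a_m^j of q_m = sum_j p_{i_j} a_m^j with (v^{k_l}, q_m) = delta_{lm}, l <= m.\<close>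
definition coeffR :: "(nat \<Rightarrow> nat \<Rightarrow> 'a::division_ring) \<Rightarrow> nat list \<Rightarrow> nat list \<Rightarrow> 'a list" where
  "coeffR y is ks = (THE a. length a = length is \<and>
     (\<forall>l<length ks. (\<Sum>j<length is. y (ks ! l) (is ! j) * a ! j) =
        (if l = length ks - 1 then 1 else 0)))"

text \<open>Coefficients c_l^m of w^m = sum_l c_l^m v^{k_l} with (w^m, p_{i_j}) = delta_{jm}, j <= m.\<close>
definition coeffL :: "(nat \<Rightarrow> nat \<Rightarrow> 'a::division_ring) \<Rightarrow> nat list \<Rightarrow> nat list \<Rightarrow> 'a list" where
  "coeffL y is ks = (THE c. length c = length ks \<and>
     (\<forall>j<length is. (\<Sum>l<length ks. c ! l * y (ks ! l) (is ! j)) =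
        (if j = length is - 1 then 1 else 0)))"

definition DeltaR :: "(nat \<Rightarrow> nat \<Rightarrow> 'a::division_ring) \<Rightarrow> (nat \<Rightarrow> 'a) \<Rightarrow> nat list \<Rightarrow> nat list \<Rightarrow> 'a" where
  "DeltaR y f is ks = (\<Sum>j<length is. f (is ! j) * coeffR y is ks ! j)"

definition DeltaL :: "(nat \<Rightarrow> nat \<Rightarrow> 'a::division_ring) \<Rightarrow> (nat \<Rightarrow> 'a) \<Rightarrow> nat list \<Rightarrow> nat list \<Rightarrow> 'a" where
  "DeltaL y g is ks = (\<Sum>l<length ks. coeffL y is ks ! l * g (ks ! l))"

end

theory Submission
  imports Defs "HOL-Combinatorics.Permutations"
begin

text \<open>The coefficients a_m^j solve the linear system (v^{k_l}, q_m) = delta_{lm}, l = 0..m, whose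
  matrix is the submatrix of D with rows k_0..k_m and columns i_0..i_m; genericity makes it
  invertible, so the solution is unique. Permuting the columns permutes the unknowns along with
  them, which leaves sum_j f_{i_j} a_m^j unchanged. The rows k_0..k_{m-1} enter the system only
  as the set of rows with right-hand side 0, so permuting them does not change the solution at
  all. The left-hand case is the mirror image, with the unknowns multiplying D from the left;
  since K need not be commutative it needs its own solvability lemma.\<close>

lemma invertible_matE:
  assumes "invertible_mat M" "M \<in> carrier_mat n n"
  obtains B where "B \<in> carrier_mat n n" "M * B = 1\<^sub>m n" "B * M = 1\<^sub>m n"
proof -
  obtain B where MB: "M * B = 1\<^sub>m (dim_row M)" and BM: "B * M = 1\<^sub>m (dim_row B)"
    using assms(1) unfolding invertible_mat_def inverts_mat_def by blast
  have "dim_col B = n" using arg_cong[OF MB, of dim_col] assms(2) by simp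
  moreover have "dim_row B = n" using arg_cong[OF BM, of dim_col] assms(2) by simp
  ultimately show thesis using MB BM assms(2) by (intro that) auto
qed

lemma mult_mat_vec_eq_iff_inverse:
  fixes M :: "'a::semiring_1 mat"
  assumes M: "M \<in> carrier_mat n n" and B: "B \<in> carrier_mat n n" "M * B = 1\<^sub>m n" "B * M = 1\<^sub>m n"
    and v: "v \<in> carrier_vec n" and u: "u \<in> carrier_vec n"
  shows "M *\<^sub>v v = u \<longleftrightarrow> v = B *\<^sub>v u"
proof
  assume "M *\<^sub>v v = u"
  then have "B *\<^sub>v u = (B * M) *\<^sub>v v" using assoc_mult_mat_vec[OF B(1) M v] by simp
  then show "v = B *\<^sub>v u" using B(3) one_mult_mat_vec[OF v] by simp
next
  assume "v = B *\<^sub>v u"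
  then have "M *\<^sub>v v = (M * B) *\<^sub>v u" using assoc_mult_mat_vec[OF M B(1) u] by simp
  then show "M *\<^sub>v v = u" using B(2) one_mult_mat_vec[OF u] by simp
qed

lemma mult_mat_eq_iff_inverse:
  fixes M :: "'a::semiring_1 mat"
  assumes M: "M \<in> carrier_mat n n" and B: "B \<in> carrier_mat n n" "M * B = 1\<^sub>m n" "B * M = 1\<^sub>m n"
    and X: "X \<in> carrier_mat k n" and Y: "Y \<in> carrier_mat k n"
  shows "X * M = Y \<longleftrightarrow> X = Y * B"
proof
  assume "X * M = Y"
  then have "Y * B = X * (M * B)" using assoc_mult_mat[OF X M B(1)] by simp
  then show "X = Y * B" using B(2) right_mult_one_mat[OF X] by simp
next
  assume "X = Y * B"
  then have "X * M = Y * (B * M)" using assoc_mult_mat[OF Y B(1) M] by simp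
  then show "X * M = Y" using B(3) right_mult_one_mat[OF Y] by simp
qed

lemma mult_mat_vec_of_list_eq_iff:
  assumes "M \<in> carrier_mat n n" "length a = n"
  shows "M *\<^sub>v vec_of_list a = vec n r \<longleftrightarrow> (\<forall>l<n. (\<Sum>j<n. M $$ (l, j) * a ! j) = r l)"
proof -
  have "M *\<^sub>v vec_of_list a = vec n r \<longleftrightarrow> (\<forall>l<n. (M *\<^sub>v vec_of_list a) $ l = r l)"
    using assms(1) by (auto simp: vec_eq_iff)
  moreover have "(M *\<^sub>v vec_of_list a) $ l = (\<Sum>j<n. M $$ (l, j) * a ! j)" if "l < n" for l
    using assms that by (simp add: scalar_prod_def lessThan_atLeast0 vec_of_list_index)
  ultimately show ?thesis by simp
qed

lemma mat_of_row_vec_of_list_mult_eq_iff: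
  assumes "M \<in> carrier_mat n n" "length c = n"
  shows "mat_of_row (vec_of_list c) * M = mat_of_row (vec n r)
    \<longleftrightarrow> (\<forall>j<n. (\<Sum>l<n. c ! l * M $$ (l, j)) = r j)"
proof -
  have "mat_of_row (vec_of_list c) * M = mat_of_row (vec n r)
      \<longleftrightarrow> (\<forall>j<n. (mat_of_row (vec_of_list c) * M) $$ (0, j) = r j)"
    using assms(1) by (auto simp: mat_eq_iff)
  moreover have "(mat_of_row (vec_of_list c) * M) $$ (0, j) = (\<Sum>l<n. c ! l * M $$ (l, j))"
    if "j < n" for j
    using assms that by (simp add: scalar_prod_def lessThan_atLeast0 vec_of_list_index)
  ultimately show ?thesis by simp
qed

lemma ex1_list_if_vec_of_list_eq:
  assumes "w \<in> carrier_vec n" "\<And>a. length a = n \<Longrightarrow> P a \<longleftrightarrow> vec_of_list a = w"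
  shows "\<exists>!a. length a = n \<and> P a"
proof (rule ex1I)
  show "length (list_of_vec w) = n \<and> P (list_of_vec w)"
    using assms vec_list[of w] by simp
next
  fix a assume "length a = n \<and> P a"
  then have "vec_of_list a = w" using assms(2) by blast
  then show "a = list_of_vec w" using list_vec[of a] by simp
qed

lemma invertible_mat_solve_right:
  fixes M :: "'a::semiring_1 mat"
  assumes "invertible_mat M" "M \<in> carrier_mat n n"
  shows "\<exists>!a. length a = n \<and> (\<forall>l<n. (\<Sum>j<n. M $$ (l, j) * a ! j) = r l)"
proof -
  obtain B where B: "B \<in> carrier_mat n n" "M * B = 1\<^sub>m n" "B * M = 1\<^sub>m n"
    using invertible_matE[OF assms] .
  show ?thesis
  proof (rule ex1_list_if_vec_of_list_eq)
    show "B *\<^sub>v vec n r \<in> carrier_vec n" using B(1) by simp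
    fix a :: "'a list" assume a: "length a = n"
    then have "vec_of_list a \<in> carrier_vec n" by (intro carrier_vecI) simp
    then show "(\<forall>l<n. (\<Sum>j<n. M $$ (l, j) * a ! j) = r l) \<longleftrightarrow> vec_of_list a = B *\<^sub>v vec n r"
      using mult_mat_vec_of_list_eq_iff[OF assms(2) a] mult_mat_vec_eq_iff_inverse[OF assms(2) B]
      by simp
  qed
qed

lemma invertible_mat_solve_left:
  fixes M :: "'a::semiring_1 mat"
  assumes "invertible_mat M" "M \<in> carrier_mat n n"
  shows "\<exists>!c. length c = n \<and> (\<forall>j<n. (\<Sum>l<n. c ! l * M $$ (l, j)) = r j)"
proof -
  obtain B where B: "B \<in> carrier_mat n n" "M * B = 1\<^sub>m n" "B * M = 1\<^sub>m n"
    using invertible_matE[OF assms] .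
  define w where "w = vec n (\<lambda>j. vec n r \<bullet> col B j)"
  have rB: "mat_of_row (vec n r) * B = mat_of_row w"
    using B(1) by (intro eq_matI) (simp_all add: w_def)
  show ?thesis
  proof (rule ex1_list_if_vec_of_list_eq)
    show "w \<in> carrier_vec n" by (simp add: w_def)
    fix c :: "'a list" assume c: "length c = n"
    then have c_row: "mat_of_row (vec_of_list c) \<in> carrier_mat 1 n"
      by (intro mat_of_row_carrier carrier_vecI) simp
    have "(\<forall>j<n. (\<Sum>l<n. c ! l * M $$ (l, j)) = r j)
        \<longleftrightarrow> mat_of_row (vec_of_list c) * M = mat_of_row (vec n r)"
      by (rule mat_of_row_vec_of_list_mult_eq_iff[OF assms(2) c, symmetric])
    also have "\<dots> \<longleftrightarrow> mat_of_row (vec_of_list c) = mat_of_row (vec n r) * B"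
      by (rule mult_mat_eq_iff_inverse[OF assms(2) B c_row]) simp
    also have "\<dots> \<longleftrightarrow> vec_of_list c = w"
      unfolding rB by (metis row_mat_of_row)
    finally show "(\<forall>j<n. (\<Sum>l<n. c ! l * M $$ (l, j)) = r j) \<longleftrightarrow> vec_of_list c = w" .
  qed
qed

lemma sum_permute_list_nth:
  assumes "p permutes {..<n}" "length xs = n" "length ys = n"
  shows "(\<Sum>j<n. F (permute_list p xs ! j) (permute_list p ys ! j)) = (\<Sum>j<n. F (xs ! j) (ys ! j))"
proof -
  have "(\<Sum>j<n. F (permute_list p xs ! j) (permute_list p ys ! j)) = (\<Sum>j<n. F (xs ! p j) (ys ! p j))"
    using assms by (simp add: permute_list_nth)
  also have "\<dots> = (\<Sum>j<n. F (xs ! j) (ys ! j))"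
    using sum.permute[OF assms(1), of "\<lambda>j. F (xs ! j) (ys ! j)"] by (simp add: comp_def)
  finally show ?thesis .
qed

lemma mset_eq_if_mset_take_eq:
  assumes "length xs = Suc m" "length ys = Suc m"
    and "mset (take m xs) = mset (take m ys)" "xs ! m = ys ! m"
  shows "mset xs = mset ys"
proof -
  have "zs = take m zs @ [zs ! m]" if "length zs = Suc m" for zs :: "'a list"
    using that by (metis lessI take_Suc_conv_app_nth take_all order_refl)
  then show ?thesis using assms by (metis mset_append)
qed

lemma subD_carrier: "subD y ks is \<in> carrier_mat (length ks) (length is)"
  by (simp add: subD_def)

lemma subD_index: "l < length ks \<Longrightarrow> j < length is \<Longrightarrow> subD y ks is $$ (l, j) = y (ks ! l) (is ! j)"
  by (simp add: subD_def)

lemma generic_invertible_subD: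
  "generic y \<Longrightarrow> distinct ks \<Longrightarrow> distinct is \<Longrightarrow> length ks = length is \<Longrightarrow> invertible_mat (subD y ks is)"
  unfolding generic_def by blast

definition is_coeffR :: "(nat \<Rightarrow> nat \<Rightarrow> 'a::division_ring) \<Rightarrow> nat list \<Rightarrow> nat list \<Rightarrow> 'a list \<Rightarrow> bool" where
  "is_coeffR y is ks a \<longleftrightarrow> length a = length is \<and>
     (\<forall>l<length ks. (\<Sum>j<length is. y (ks ! l) (is ! j) * a ! j) = (if l = length ks - 1 then 1 else 0))"

lemma coeffR_eq_iff:
  assumes "generic y" "distinct ks" "distinct is" "length ks = length is"
  shows "coeffR y is ks = a \<longleftrightarrow> is_coeffR y is ks a"
proof -
  have sq: "subD y ks is \<in> carrier_mat (length is) (length is)"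
    using subD_carrier[of y ks "is"] assms(4) by simp
  have "\<exists>!a. is_coeffR y is ks a"
    using invertible_mat_solve_right[OF generic_invertible_subD[OF assms] sq,
        where r = "\<lambda>l. if l = length ks - 1 then 1 else 0"] assms(4)
    by (simp add: is_coeffR_def subD_index)
  moreover have "coeffR y is ks = (THE a. is_coeffR y is ks a)"
    by (simp add: coeffR_def is_coeffR_def)
  ultimately show ?thesis by (metis theI')
qed

lemma is_coeffR_coeffR:
  assumes "generic y" "distinct ks" "distinct is" "length ks = length is"
  shows "is_coeffR y is ks (coeffR y is ks)"
  using coeffR_eq_iff[OF assms] by blast

lemma coeffR_permute_columns:
  assumes "generic y" "distinct ks" "distinct is" "length ks = length is"
    and p: "p permutes {..<length is}"
  shows "coeffR y (permute_list p is) ks = permute_list p (coeffR y is ks)"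
proof -
  define a where "a = coeffR y is ks"
  have a: "is_coeffR y is ks a" unfolding a_def using assms(1-4) by (rule is_coeffR_coeffR)
  then have "length a = length is" by (simp add: is_coeffR_def)
  then have "(\<Sum>j<length is. y k (permute_list p is ! j) * permute_list p a ! j)
      = (\<Sum>j<length is. y k (is ! j) * a ! j)" for k
    using sum_permute_list_nth[OF p, where F = "\<lambda>i c. y k i * c"] by simp
  with a have "is_coeffR y (permute_list p is) ks (permute_list p a)"
    by (simp add: is_coeffR_def)
  moreover have "distinct (permute_list p is)" using assms(3) p by simp
  ultimately show ?thesis using coeffR_eq_iff[OF assms(1,2)] assms(4) by (simp add: a_def)
qed

lemma coeffR_permute_init_rows:
  assumes "generic y" "distinct ks" "distinct is"
    and len: "length is = Suc m" "length ks = Suc m" "length ks' = Suc m"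
    and init: "mset (take m ks') = mset (take m ks)" and last: "ks' ! m = ks ! m"
  shows "coeffR y is ks' = coeffR y is ks"
proof -
  have "distinct ks'"
    using assms(2) mset_eq_if_mset_take_eq[OF len(3,2) init last] by (metis mset_eq_imp_distinct_iff)
  define a where "a = coeffR y is ks"
  have a: "is_coeffR y is ks a" unfolding a_def using assms(1-3) len by (intro is_coeffR_coeffR) simp_all
  have "(\<Sum>j<length is. y (ks' ! l) (is ! j) * a ! j) = (if l = m then 1 else 0)" if "l < Suc m" for l
  proof (cases "l = m")
    case True
    then show ?thesis using a last len by (simp add: is_coeffR_def)
  next
    case False
    then have "l < m" using that by simp
    then have "ks' ! l \<in> set (take m ks')"
      using nth_mem[of l "take m ks'"] len by simp
    then have "ks' ! l \<in> set (take m ks)"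
      using arg_cong[OF init, of set_mset] by simp
    then obtain l' where "l' < m" "ks' ! l = ks ! l'" by (auto simp: in_set_conv_nth)
    then show ?thesis using a False len by (simp add: is_coeffR_def)
  qed
  then have "is_coeffR y is ks' a" using a len by (simp add: is_coeffR_def)
  then show ?thesis using coeffR_eq_iff[OF assms(1) \<open>distinct ks'\<close> assms(3)] len by (simp add: a_def)
qed

lemma DeltaR_permute_columns:
  assumes "generic y" "distinct ks" "distinct is" "length ks = length is"
    and "mset is' = mset is"
  shows "DeltaR y f is' ks = DeltaR y f is ks"
proof -
  obtain p where p: "p permutes {..<length is}" and is': "is' = permute_list p is"
    using mset_eq_permutation[OF assms(5)] by metis
  have "length (coeffR y is ks) = length is"
    using is_coeffR_coeffR[OF assms(1-4)] by (simp add: is_coeffR_def)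
  then show ?thesis
    using sum_permute_list_nth[OF p, where F = "\<lambda>i c. f i * c"]
    by (simp add: DeltaR_def is' coeffR_permute_columns[OF assms(1-4) p])
qed

lemma DeltaR_permute_init_rows:
  assumes "generic y" "distinct ks" "distinct is"
    and "length is = Suc m" "length ks = Suc m" "length ks' = Suc m"
    and "mset (take m ks') = mset (take m ks)" "ks' ! m = ks ! m"
  shows "DeltaR y f is ks' = DeltaR y f is ks"
  by (simp add: DeltaR_def coeffR_permute_init_rows[OF assms])

definition is_coeffL :: "(nat \<Rightarrow> nat \<Rightarrow> 'a::division_ring) \<Rightarrow> nat list \<Rightarrow> nat list \<Rightarrow> 'a list \<Rightarrow> bool" where
  "is_coeffL y is ks c \<longleftrightarrow> length c = length ks \<and>
     (\<forall>j<length is. (\<Sum>l<length ks. c ! l * y (ks ! l) (is ! j)) = (if j = length is - 1 then 1 else 0))"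

lemma coeffL_eq_iff:
  assumes "generic y" "distinct ks" "distinct is" "length ks = length is"
  shows "coeffL y is ks = c \<longleftrightarrow> is_coeffL y is ks c"
proof -
  have sq: "subD y ks is \<in> carrier_mat (length ks) (length ks)"
    using subD_carrier[of y ks "is"] assms(4) by simp
  have "\<exists>!c. is_coeffL y is ks c"
    using invertible_mat_solve_left[OF generic_invertible_subD[OF assms] sq,
        where r = "\<lambda>j. if j = length is - 1 then 1 else 0"] assms(4)
    by (simp add: is_coeffL_def subD_index)
  moreover have "coeffL y is ks = (THE c. is_coeffL y is ks c)"
    by (simp add: coeffL_def is_coeffL_def)
  ultimately show ?thesis by (metis theI')
qed

lemma is_coeffL_coeffL:
  assumes "generic y" "distinct ks" "distinct is" "length ks = length is"
  shows "is_coeffL y is ks (coeffL y is ks)"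
  using coeffL_eq_iff[OF assms] by blast

lemma coeffL_permute_rows:
  assumes "generic y" "distinct ks" "distinct is" "length ks = length is"
    and p: "p permutes {..<length ks}"
  shows "coeffL y is (permute_list p ks) = permute_list p (coeffL y is ks)"
proof -
  define c where "c = coeffL y is ks"
  have c: "is_coeffL y is ks c" unfolding c_def using assms(1-4) by (rule is_coeffL_coeffL)
  then have "length c = length ks" by (simp add: is_coeffL_def)
  then have "(\<Sum>l<length ks. permute_list p c ! l * y (permute_list p ks ! l) i)
      = (\<Sum>l<length ks. c ! l * y (ks ! l) i)" for i
    using sum_permute_list_nth[OF p, where F = "\<lambda>c k. c * y k i"] by simp
  with c have "is_coeffL y is (permute_list p ks) (permute_list p c)"
    by (simp add: is_coeffL_def)
  moreover have "distinct (permute_list p ks)" using assms(2) p by simp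
  ultimately show ?thesis using coeffL_eq_iff[OF assms(1) _ assms(3)] assms(4) by (simp add: c_def)
qed

lemma coeffL_permute_init_columns:
  assumes "generic y" "distinct ks" "distinct is"
    and len: "length ks = Suc m" "length is = Suc m" "length is' = Suc m"
    and init: "mset (take m is') = mset (take m is)" and last: "is' ! m = is ! m"
  shows "coeffL y is' ks = coeffL y is ks"
proof -
  have "distinct is'"
    using assms(3) mset_eq_if_mset_take_eq[OF len(3,2) init last] by (metis mset_eq_imp_distinct_iff)
  define c where "c = coeffL y is ks"
  have c: "is_coeffL y is ks c" unfolding c_def using assms(1-3) len by (intro is_coeffL_coeffL) simp_all
  have "(\<Sum>l<length ks. c ! l * y (ks ! l) (is' ! j)) = (if j = m then 1 else 0)" if "j < Suc m" for j
  proof (cases "j = m")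
    case True
    then show ?thesis using c last len by (simp add: is_coeffL_def)
  next
    case False
    then have "j < m" using that by simp
    then have "is' ! j \<in> set (take m is')"
      using nth_mem[of j "take m is'"] len by simp
    then have "is' ! j \<in> set (take m is)"
      using arg_cong[OF init, of set_mset] by simp
    then obtain j' where "j' < m" "is' ! j = is ! j'" by (auto simp: in_set_conv_nth)
    then show ?thesis using c False len by (simp add: is_coeffL_def)
  qed
  then have "is_coeffL y is' ks c" using c len by (simp add: is_coeffL_def)
  then show ?thesis using coeffL_eq_iff[OF assms(1,2) \<open>distinct is'\<close>] len by (simp add: c_def)
qed

lemma DeltaL_permute_rows:
  assumes "generic y" "distinct ks" "distinct is" "length ks = length is"
    and "mset ks' = mset ks"
  shows "DeltaL y g is ks' = DeltaL y g is ks"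
proof -
  obtain p where p: "p permutes {..<length ks}" and ks': "ks' = permute_list p ks"
    using mset_eq_permutation[OF assms(5)] by metis
  have "length (coeffL y is ks) = length ks"
    using is_coeffL_coeffL[OF assms(1-4)] by (simp add: is_coeffL_def)
  then show ?thesis
    using sum_permute_list_nth[OF p, where F = "\<lambda>c k. c * g k"]
    by (simp add: DeltaL_def ks' coeffL_permute_rows[OF assms(1-4) p])
qed

lemma DeltaL_permute_init_columns:
  assumes "generic y" "distinct ks" "distinct is"
    and "length ks = Suc m" "length is = Suc m" "length is' = Suc m"
    and "mset (take m is') = mset (take m is)" "is' ! m = is ! m"
  shows "DeltaL y g is' ks = DeltaL y g is ks"
  by (simp add: DeltaL_def coeffL_permute_init_columns[OF assms])

theorem mainTheorem4:
  fixes y :: "nat \<Rightarrow> nat \<Rightarrow> 'a::division_ring" and f g :: "nat \<Rightarrow> 'a"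
    and m :: nat and "is" ks :: "nat list"
  assumes gen: "generic y"
    and len_is: "length is = Suc m" and len_ks: "length ks = Suc m"
    and dist_is: "distinct is" and dist_ks: "distinct ks"
  shows "(\<forall>is'. mset is' = mset is \<longrightarrow> DeltaR y f is' ks = DeltaR y f is ks)
       \<and> (\<forall>ks'. length ks' = Suc m \<longrightarrow> mset (take m ks') = mset (take m ks) \<longrightarrow> ks' ! m = ks ! m
              \<longrightarrow> DeltaR y f is ks' = DeltaR y f is ks)
       \<and> (\<forall>ks'. mset ks' = mset ks \<longrightarrow> DeltaL y g is ks' = DeltaL y g is ks)
       \<and> (\<forall>is'. length is' = Suc m \<longrightarrow> mset (take m is') = mset (take m is) \<longrightarrow> is' ! m = is ! m
              \<longrightarrow> DeltaL y g is' ks = DeltaL y g is ks)"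
proof -
  have len: "length ks = length is" using len_is len_ks by simp
  show ?thesis
    using DeltaR_permute_columns[OF gen dist_ks dist_is len]
      DeltaR_permute_init_rows[OF gen dist_ks dist_is len_is len_ks]
      DeltaL_permute_rows[OF gen dist_ks dist_is len]
      DeltaL_permute_init_columns[OF gen dist_ks dist_is len_ks len_is]
    by blast
qed

end
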